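(* There exist infinitely many graphs which are $1$-critical but not $0$-critical.
   Context: All graphs are finite and simple; $\mathrm{Forb}(H)$ is the family of graphs with no induced subgraph isomorphic to $H$. A family is hereditary if closed under isomorphism and induced subgraphs. $\mathcal{H}(s,t)$ is the family of graphs whose vertex set can be partitioned into $s$ stable sets and $t$ cliques. For a hereditary family $\mathcal{F}$, $\chi_c(\mathcal{F})$ is the maximum integer $l$ such that $\mathcal{H}(s,l-s)\subseteq\mathcal{F}$ for some $0\le s\le l$. Let $l=\chi_c(\mathcal{F})$. A graph $J$ is $\mathcal{F}$-reduced if there is an integer $0\le s\le l-1$ such that $\mathcal{F}$ contains every graph whose vertex set can be partitioned into $l$ parts, the first of which induces a graph isomorphic to an induced subgraph of $J$, $s$ of the remaining parts are stable sets and the other $l-1-s$ are cliques; $\mathrm{red}(\mathcal{F})$ is the family of $\mathcal{F}$-reduced graphs. A graph $G$ is an $s$-star (for an integer $s\ge0$) if there is $S\subseteq V(G)$ with $|S|\le s$ such that $G-S$ is complete or edgeless and every vertex of $S$ is adjacent either to all vertices of $V(G)\setminus S$ or to none of them (so $0$-stars are exactly complete or edgeless graphs). A hereditary family $\mathcal{F}$ is $s$-critical if there exists $n_0$ such that every $K\in\mathrm{red}(\mathcal{F})$ with $|V(K)|\ge n_0$ is an $s$-star. A graph $H$ is $s$-critical if $\mathrm{Forb}(H)$ is $s$-critical. *)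

theory Defs
  imports Main
begin

text \<open>A graph is a pair (V, E) of a finite vertex set and a set of 2-element edges.
  Graph families are sets of graphs with vertices in nat (every finite graph is
  isomorphic to one of these).\<close>

type_synonym 'a graph = "'a set \<times> 'a set set"

definition verts :: "'a graph \<Rightarrow> 'a set" where "verts G = fst G"
definition edges :: "'a graph \<Rightarrow> 'a set set" where "edges G = snd G"

definition graph :: "'a graph \<Rightarrow> bool" where
  "graph G \<longleftrightarrow> finite (verts G) \<and>
     edges G \<subseteq> {e. \<exists>u v. u \<in> verts G \<and> v \<in> verts G \<and> u \<noteq> v \<and> e = {u, v}}"

definition adj :: "'a graph \<Rightarrow> 'a \<Rightarrow> 'a \<Rightarrow> bool" where
  "adj G u v \<longleftrightarrow> {u, v} \<in> edges G"

definition induced :: "'a graph \<Rightarrow> 'a set \<Rightarrow> 'a graph" where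
  "induced G X = (X, {e \<in> edges G. e \<subseteq> X})"

definition iso :: "'a graph \<Rightarrow> 'b graph \<Rightarrow> bool" where
  "iso G H \<longleftrightarrow> (\<exists>f. bij_betw f (verts G) (verts H) \<and>
     (\<forall>u\<in>verts G. \<forall>v\<in>verts G. adj G u v \<longleftrightarrow> adj H (f u) (f v)))"

definition has_induced :: "'a graph \<Rightarrow> 'b graph \<Rightarrow> bool" where
  "has_induced G H \<longleftrightarrow> (\<exists>X \<subseteq> verts G. iso (induced G X) H)"

definition stable_in :: "'a graph \<Rightarrow> 'a set \<Rightarrow> bool" where
  "stable_in G X \<longleftrightarrow> (\<forall>u\<in>X. \<forall>v\<in>X. \<not> adj G u v)"

definition clique_in :: "'a graph \<Rightarrow> 'a set \<Rightarrow> bool" where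
  "clique_in G X \<longleftrightarrow> (\<forall>u\<in>X. \<forall>v\<in>X. u \<noteq> v \<longrightarrow> adj G u v)"

definition Forb :: "'b graph \<Rightarrow> nat graph set" where
  "Forb H = {G. graph G \<and> \<not> has_induced G H}"

text \<open>H(s,t): vertex set partitioned into s stable sets and t cliques (parts may be
  empty). Part i is {v. p v = i}; parts 0..s-1 are stable, parts s..s+t-1 cliques.\<close>
definition Hst :: "nat \<Rightarrow> nat \<Rightarrow> nat graph set" where
  "Hst s t = {G. graph G \<and> (\<exists>p :: nat \<Rightarrow> nat. (\<forall>v\<in>verts G. p v < s + t) \<and>
       (\<forall>i<s. stable_in G {v\<in>verts G. p v = i}) \<and>
       (\<forall>i. s \<le> i \<and> i < s + t \<longrightarrow> clique_in G {v\<in>verts G. p v = i}))}"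

definition chi_c :: "nat graph set \<Rightarrow> nat" where
  "chi_c F = (GREATEST l. \<exists>s\<le>l. Hst s (l - s) \<subseteq> F)"

definition reduced :: "nat graph set \<Rightarrow> nat graph \<Rightarrow> bool" where
  "reduced F J \<longleftrightarrow> (let l = chi_c F in
     \<exists>s. s + 1 \<le> l \<and>
       (\<forall>G. graph G \<longrightarrow>
          (\<forall>p :: nat \<Rightarrow> nat. (\<forall>v\<in>verts G. p v < l) \<and>
             has_induced J (induced G {v\<in>verts G. p v = 0}) \<and>
             (\<forall>i. 1 \<le> i \<and> i \<le> s \<longrightarrow> stable_in G {v\<in>verts G. p v = i}) \<and>
             (\<forall>i. s < i \<and> i < l \<longrightarrow> clique_in G {v\<in>verts G. p v = i})
           \<longrightarrow> G \<in> F)))"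

definition red :: "nat graph set \<Rightarrow> nat graph set" where
  "red F = {J. graph J \<and> reduced F J}"

definition s_star :: "nat \<Rightarrow> 'a graph \<Rightarrow> bool" where
  "s_star s G \<longleftrightarrow> (\<exists>S \<subseteq> verts G. card S \<le> s \<and>
     (clique_in G (verts G - S) \<or> stable_in G (verts G - S)) \<and>
     (\<forall>x\<in>S. (\<forall>v \<in> verts G - S. adj G x v) \<or> (\<forall>v \<in> verts G - S. \<not> adj G x v)))"

definition critical_family :: "nat \<Rightarrow> nat graph set \<Rightarrow> bool" where
  "critical_family s F \<longleftrightarrow>
     (\<exists>n0. \<forall>K\<in>red F. card (verts K) \<ge> n0 \<longrightarrow> s_star s K)"

definition critical_graph :: "nat \<Rightarrow> nat graph \<Rightarrow> bool" where
  "critical_graph s H \<longleftrightarrow> critical_family s (Forb H)"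

end

theory Submission
  imports Defs
begin

text \<open>Let \<open>H\<^sub>a\<close> be \<open>K\<^sub>a\<^sub>,\<^sub>a\<close> plus a disjoint diamond, \<open>a \<ge> 3\<close>. It has a stable set of size \<open>a + 2\<close>, and it
  lies in \<open>\<H>(s, t)\<close> as soon as \<open>s + t \<ge> a + 2\<close>; hence \<open>\<chi>\<^sub>c(Forb H\<^sub>a) = a + 1\<close>, attained by \<open>\<H>(0, a + 1)\<close>.
  A reduced graph \<open>J\<close> must not allow \<open>H\<^sub>a\<close> itself to be partitioned as in the definition of
  reducedness. With \<open>s \<ge> 2\<close> stable parts this is always possible; with \<open>s = 1\<close> it is possible
  unless \<open>J\<close> is complete; with \<open>s = 0\<close> it is possible as soon as \<open>J\<close> contains an induced co-\<open>P\<^sub>3\<close>,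
  \<open>C\<^sub>4\<close> or diamond, and graphs avoiding these three are 1-stars. So \<open>Forb H\<^sub>a\<close> is 1-critical.
  On the other hand every star \<open>K\<^sub>1\<^sub>,\<^sub>m\<close> is reduced with \<open>s = 0\<close>, and for \<open>m \<ge> 2\<close> it is not a
  0-star, so \<open>Forb H\<^sub>a\<close> is not 0-critical. The graphs \<open>H\<^sub>a\<close> differ in size.\<close>

lemma adj_sym: "adj G u v \<longleftrightarrow> adj G v u"
  by (simp add: adj_def insert_commute)

lemma graph_adjD: "graph G \<Longrightarrow> adj G u v \<Longrightarrow> u \<in> verts G \<and> v \<in> verts G \<and> u \<noteq> v"
  unfolding graph_def adj_def by (auto simp: doubleton_eq_iff)

lemma verts_induced [simp]: "verts (induced G X) = X"
  by (simp add: induced_def verts_def)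

lemma adj_induced [simp]: "adj (induced G X) u v \<longleftrightarrow> adj G u v \<and> u \<in> X \<and> v \<in> X"
  by (auto simp: adj_def induced_def edges_def)

lemma iso_card_verts: "iso G H \<Longrightarrow> card (verts G) = card (verts H)"
  unfolding iso_def using bij_betw_same_card by blast

definition embedding :: "'a graph \<Rightarrow> 'b graph \<Rightarrow> ('a \<Rightarrow> 'b) \<Rightarrow> bool" where
  "embedding H G g \<longleftrightarrow> inj_on g (verts H) \<and> g ` verts H \<subseteq> verts G \<and>
     (\<forall>u\<in>verts H. \<forall>v\<in>verts H. adj H u v \<longleftrightarrow> adj G (g u) (g v))"

lemma has_induced_iff_embedding: "has_induced G H \<longleftrightarrow> (\<exists>g. embedding H G g)"
proof
  assume "has_induced G H"
  then obtain X f where X: "X \<subseteq> verts G" and f: "bij_betw f X (verts H)"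
    and adj_f: "\<forall>u\<in>X. \<forall>v\<in>X. adj G u v \<longleftrightarrow> adj H (f u) (f v)"
    unfolding has_induced_def iso_def by auto
  have g: "bij_betw (inv_into X f) (verts H) X"
    using f by (rule bij_betw_inv_into)
  have "embedding H G (inv_into X f)"
    unfolding embedding_def
  proof (intro conjI ballI)
    show "inj_on (inv_into X f) (verts H)" using g by (rule bij_betw_imp_inj_on)
    show "inv_into X f ` verts H \<subseteq> verts G" using g X by (simp add: bij_betw_def)
    fix u v assume "u \<in> verts H" "v \<in> verts H"
    moreover have "f (inv_into X f w) = w" if "w \<in> verts H" for w
      using f that by (simp add: bij_betw_def f_inv_into_f)
    ultimately show "adj H u v \<longleftrightarrow> adj G (inv_into X f u) (inv_into X f v)"
      using adj_f bij_betwE[OF g] by metis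
  qed
  then show "\<exists>g. embedding H G g" by blast
next
  assume "\<exists>g. embedding H G g"
  then obtain g where inj: "inj_on g (verts H)" and sub: "g ` verts H \<subseteq> verts G"
    and adj_g: "\<forall>u\<in>verts H. \<forall>v\<in>verts H. adj H u v \<longleftrightarrow> adj G (g u) (g v)"
    unfolding embedding_def by blast
  have "bij_betw (inv_into (verts H) g) (g ` verts H) (verts H)"
    using inj by (simp add: bij_betw_inv_into inj_on_imp_bij_betw)
  moreover have "adj G x y \<longleftrightarrow> adj H (inv_into (verts H) g x) (inv_into (verts H) g y)"
    if "x \<in> g ` verts H" "y \<in> g ` verts H" for x y
    using that adj_g by (auto simp: inv_into_f_f[OF inj])
  ultimately have "iso (induced G (g ` verts H)) H"
    unfolding iso_def by auto
  then show "has_induced G H"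
    unfolding has_induced_def using sub by blast
qed

lemma has_induced_inducedI:
  assumes "inj_on g X" "g ` X \<subseteq> verts J"
    and "\<And>u v. u \<in> X \<Longrightarrow> v \<in> X \<Longrightarrow> adj G u v \<longleftrightarrow> adj J (g u) (g v)"
  shows "has_induced J (induced G X)"
  unfolding has_induced_iff_embedding embedding_def using assms by auto

lemma has_induced_self: "has_induced G G"
proof -
  have "embedding G G id" by (simp add: embedding_def)
  then show ?thesis unfolding has_induced_iff_embedding by blast
qed

lemma has_induced_empty: "has_induced J (induced G {})"
  by (rule has_induced_inducedI) auto

lemma card_stable_le_clique_parts:
  assumes "stable_in G S" "S \<subseteq> verts G" "finite I"
    and "\<And>v. v \<in> S \<Longrightarrow> p v \<in> I" and "\<And>i. i \<in> I \<Longrightarrow> clique_in G {v \<in> verts G. p v = i}"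
  shows "card S \<le> card I"
proof -
  have "inj_on p S"
  proof (rule inj_onI, rule ccontr)
    fix x y assume xy: "x \<in> S" "y \<in> S" "p x = p y" "x \<noteq> y"
    have "clique_in G {v \<in> verts G. p v = p x}" using assms(4,5) xy(1) by blast
    then have "adj G x y" using xy assms(2) unfolding clique_in_def by auto
    then show False using assms(1) xy unfolding stable_in_def by blast
  qed
  then show ?thesis using assms(3,4) by (meson card_inj_on_le image_subsetI)
qed

lemma embedded_stable_le_clique_parts:
  assumes "embedding H G g" "T \<subseteq> verts H" "stable_in H T" "finite I"
    and "\<And>v. v \<in> T \<Longrightarrow> p (g v) \<in> I" and "\<And>i. i \<in> I \<Longrightarrow> clique_in G {v \<in> verts G. p v = i}"
  shows "card T \<le> card I"
proof -
  have inj: "inj_on g T" and sub: "g ` T \<subseteq> verts G"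
    using assms(1,2) unfolding embedding_def by (auto intro: inj_on_subset)
  have "stable_in G (g ` T)"
    using assms(1-3) unfolding embedding_def stable_in_def by blast
  then have "card (g ` T) \<le> card I"
    using sub assms(4-6) by (intro card_stable_le_clique_parts) auto
  then show ?thesis using card_image[OF inj] by simp
qed

section \<open>Star sets\<close>

definition star_set :: "'a graph \<Rightarrow> 'a set \<Rightarrow> bool" where
  "star_set G A \<longleftrightarrow> stable_in G A \<or> (\<exists>c\<in>A. stable_in G (A - {c}) \<and> (\<forall>v\<in>A - {c}. adj G c v))"

lemma star_set_subset:
  assumes "star_set G A" "B \<subseteq> A"
  shows "star_set G B"
  using assms(1)[unfolded star_set_def]
proof (elim disjE bexE conjE)
  assume "stable_in G A"
  then show ?thesis using assms(2) unfolding star_set_def stable_in_def by blast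
next
  fix c assume c: "c \<in> A" "stable_in G (A - {c})" "\<forall>v\<in>A - {c}. adj G c v"
  show ?thesis
  proof (cases "c \<in> B")
    case True
    then show ?thesis using c assms(2) unfolding star_set_def stable_in_def by blast
  next
    case False
    then have "B \<subseteq> A - {c}" using assms(2) by blast
    then show ?thesis using c(2) unfolding star_set_def stable_in_def by blast
  qed
qed

lemma star_set_pullback:
  assumes "star_set G (g ` A)" "inj_on g A"
    and "\<And>u v. u \<in> A \<Longrightarrow> v \<in> A \<Longrightarrow> adj H u v \<longleftrightarrow> adj G (g u) (g v)"
  shows "star_set H A"
  using assms(1)[unfolded star_set_def]
proof (elim disjE bexE conjE)
  assume "stable_in G (g ` A)"
  then show ?thesis using assms(3) unfolding star_set_def stable_in_def by blast
next
  fix c assume c: "c \<in> g ` A" "stable_in G (g ` A - {c})" "\<forall>v\<in>g ` A - {c}. adj G c v"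
  obtain c0 where "c0 \<in> A" "c = g c0" using c(1) by blast
  moreover have "g ` A - {g c0} = g ` (A - {c0})"
    using assms(2) \<open>c0 \<in> A\<close> by (simp add: inj_on_image_set_diff)
  ultimately have "stable_in H (A - {c0})" "\<forall>v\<in>A - {c0}. adj H c0 v"
    using c(2,3) assms(3) unfolding stable_in_def by auto
  then show ?thesis unfolding star_set_def using \<open>c0 \<in> A\<close> by blast
qed

lemma star_set_edge_centre:
  assumes "star_set G A" "x \<in> A" "y \<in> A" "adj G x y"
  obtains c where "c \<in> {x, y}" "stable_in G (A - {c})" "\<forall>v\<in>A - {c}. adj G c v"
  using assms unfolding star_set_def stable_in_def by blast

definition star_graph :: "nat \<Rightarrow> nat graph" where
  "star_graph m = ({..m}, {{0, i} | i. 1 \<le> i \<and> i \<le> m})"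

lemma verts_star_graph [simp]: "verts (star_graph m) = {..m}"
  by (simp add: star_graph_def verts_def)

lemma adj_star_graph [simp]:
  "adj (star_graph m) u v \<longleftrightarrow> (u = 0 \<and> 1 \<le> v \<and> v \<le> m) \<or> (v = 0 \<and> 1 \<le> u \<and> u \<le> m)"
  unfolding adj_def edges_def star_graph_def by (auto simp: doubleton_eq_iff)

lemma graph_star_graph: "graph (star_graph m)"
  unfolding graph_def by (simp add: star_graph_def verts_def edges_def) force

lemma not_s_star_0_star_graph:
  assumes "2 \<le> m"
  shows "\<not> s_star 0 (star_graph m)"
proof
  assume "s_star 0 (star_graph m)"
  then obtain S where "S \<subseteq> {..m}" "card S = 0"
    and "clique_in (star_graph m) ({..m} - S) \<or> stable_in (star_graph m) ({..m} - S)"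
    unfolding s_star_def by auto
  then have "clique_in (star_graph m) {..m} \<or> stable_in (star_graph m) {..m}"
    using finite_subset[of S "{..m}"] by auto
  moreover have "0 \<in> {..m}" "1 \<in> {..m}" "2 \<in> {..m}" "(1::nat) \<noteq> 2" using assms by auto
  moreover have "\<not> adj (star_graph m) 1 2" and "adj (star_graph m) 0 1" using assms by auto
  ultimately show False
    unfolding clique_in_def stable_in_def by blast
qed

lemma star_set_star_graph:
  assumes "B \<subseteq> {..m}"
  shows "star_set (star_graph m) B"
proof (cases "0 \<in> B")
  case True
  have "stable_in (star_graph m) (B - {0})" by (simp add: stable_in_def)
  moreover have "\<forall>v\<in>B - {0}. adj (star_graph m) 0 v" using assms by auto
  ultimately show ?thesis unfolding star_set_def using True by blast
next
  case False
  then have "stable_in (star_graph m) B" by (auto simp: stable_in_def)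
  then show ?thesis unfolding star_set_def by blast
qed

lemma star_set_if_has_induced_star_graph:
  assumes "has_induced (star_graph m) (induced G P)"
  shows "star_set G P"
proof -
  obtain g where g: "embedding (induced G P) (star_graph m) g"
    using assms unfolding has_induced_iff_embedding by blast
  show ?thesis
  proof (rule star_set_pullback)
    show "star_set (star_graph m) (g ` P)"
      using g unfolding embedding_def by (intro star_set_star_graph) simp
    show "inj_on g P" using g unfolding embedding_def by simp
    show "adj G u v \<longleftrightarrow> adj (star_graph m) (g u) (g v)" if "u \<in> P" "v \<in> P" for u v
      using g that unfolding embedding_def by simp
  qed
qed

section \<open>A criterion for 1-stars\<close>

lemma s_star_if_clique: "clique_in G (verts G) \<Longrightarrow> s_star s G"
  unfolding s_star_def by (intro exI[where x = "{}"]) auto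

lemma coP3_free_non_neighbours:
  assumes "graph J" "b \<in> verts J"
    and no_coP3: "\<And>x y z. {x, y, z} \<subseteq> verts J \<Longrightarrow> adj J x y \<Longrightarrow> z \<noteq> x \<Longrightarrow> z \<noteq> y \<Longrightarrow>
      \<not> adj J x z \<Longrightarrow> \<not> adj J y z \<Longrightarrow> False"
  defines "P \<equiv> {x \<in> verts J. x = b \<or> \<not> adj J x b}"
  shows "stable_in J P" and "\<forall>v\<in>verts J - P. \<forall>z\<in>P. adj J v z"
proof -
  show "stable_in J P"
    unfolding stable_in_def
  proof (intro ballI notI)
    fix x y assume xy: "x \<in> P" "y \<in> P" "adj J x y"
    then have "x \<noteq> y" using graph_adjD[OF assms(1)] by blast
    moreover have "adj J y x" using xy(3) adj_sym[of J] by blast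
    ultimately show False
      using no_coP3[of x y b] xy assms(2) unfolding P_def by blast
  qed
  show "\<forall>v\<in>verts J - P. \<forall>z\<in>P. adj J v z"
  proof (intro ballI, rule ccontr)
    fix v z assume vz: "v \<in> verts J - P" "z \<in> P" "\<not> adj J v z"
    then have "adj J v b" "z \<noteq> v" "\<not> adj J b z \<or> z = b" using adj_sym[of J] unfolding P_def by auto
    then show False
      using no_coP3[of v b z] vz assms(2) unfolding P_def by blast
  qed
qed

text \<open>A co-\<open>P\<^sub>3\<close>-free graph is complete multipartite. If some part has two vertices, at most one
  vertex lies outside it, since two outside vertices span a \<open>C\<^sub>4\<close> or a diamond with them.\<close>

lemma s_star_1_if_no_coP3_C4_diamond:
  assumes "graph J"
    and no_coP3: "\<And>x y z. {x, y, z} \<subseteq> verts J \<Longrightarrow> adj J x y \<Longrightarrow> z \<noteq> x \<Longrightarrow> z \<noteq> y \<Longrightarrow>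
      \<not> adj J x z \<Longrightarrow> \<not> adj J y z \<Longrightarrow> False"
    and no_C4: "\<And>b c v w. {b, c, v, w} \<subseteq> verts J \<Longrightarrow> b \<noteq> c \<Longrightarrow> v \<noteq> w \<Longrightarrow>
      \<not> adj J b c \<Longrightarrow> \<not> adj J v w \<Longrightarrow> adj J b v \<Longrightarrow> adj J b w \<Longrightarrow> adj J c v \<Longrightarrow> adj J c w \<Longrightarrow> False"
    and no_diamond: "\<And>b c v w. {b, c, v, w} \<subseteq> verts J \<Longrightarrow> b \<noteq> c \<Longrightarrow>
      \<not> adj J b c \<Longrightarrow> adj J v w \<Longrightarrow> adj J b v \<Longrightarrow> adj J b w \<Longrightarrow> adj J c v \<Longrightarrow> adj J c w \<Longrightarrow> False"
  shows "s_star 1 J"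
proof (cases "clique_in J (verts J)")
  case True
  then show ?thesis by (rule s_star_if_clique)
next
  case False
  then obtain b c where bc: "b \<in> verts J" "c \<in> verts J" "b \<noteq> c" "\<not> adj J b c"
    unfolding clique_in_def by auto
  define P where "P = {x \<in> verts J. x = b \<or> \<not> adj J x b}"
  have P_stable: "stable_in J P"
    unfolding P_def by (rule coP3_free_non_neighbours(1)[OF assms(1) bc(1) no_coP3])
  have P_joined: "\<forall>v\<in>verts J - P. \<forall>z\<in>P. adj J v z"
    unfolding P_def by (rule coP3_free_non_neighbours(2)[OF assms(1) bc(1) no_coP3])
  have "b \<in> P" "c \<in> P" using bc by (simp_all add: P_def adj_sym)
  have "v = w" if "v \<in> verts J - P" "w \<in> verts J - P" for v w
  proof (rule ccontr)
    assume "v \<noteq> w"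
    have "adj J v b" "adj J w b" "adj J v c" "adj J w c"
      using P_joined that \<open>b \<in> P\<close> \<open>c \<in> P\<close> by blast+
    then have "adj J b v" "adj J b w" "adj J c v" "adj J c w"
      by (simp_all add: adj_sym)
    moreover have "{b, c, v, w} \<subseteq> verts J" using bc that by blast
    ultimately show False
      using no_C4[of b c v w] no_diamond[of b c v w] bc(3,4) \<open>v \<noteq> w\<close> by blast
  qed
  moreover have "finite (verts J - P)" using assms(1) by (simp add: graph_def)
  ultimately have "card (verts J - P) \<le> 1" by (simp add: card_le_Suc0_iff_eq)
  moreover have "verts J - (verts J - P) = P" by (auto simp: P_def)
  ultimately show ?thesis
    unfolding s_star_def
  proof (intro exI[where x = "verts J - P"] conjI)
    show "\<forall>x\<in>verts J - P. (\<forall>v\<in>verts J - (verts J - P). adj J x v) \<or>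
        (\<forall>v\<in>verts J - (verts J - P). \<not> adj J x v)"
      using P_joined \<open>verts J - (verts J - P) = P\<close> by simp
  qed (use P_stable in simp_all)
qed

section \<open>Reduced graphs\<close>

lemma not_in_Forb_self: "H \<notin> Forb H"
  unfolding Forb_def using has_induced_self by blast

lemma HstI:
  assumes "graph G" "\<forall>v\<in>verts G. p v < s + t"
    and "\<forall>i<s. stable_in G {v\<in>verts G. p v = i}"
    and "\<forall>i. s \<le> i \<and> i < s + t \<longrightarrow> clique_in G {v\<in>verts G. p v = i}"
  shows "G \<in> Hst s t"
  unfolding Hst_def using assms by blast

definition reduced_partition :: "nat \<Rightarrow> nat \<Rightarrow> 'a graph \<Rightarrow> nat graph \<Rightarrow> (nat \<Rightarrow> nat) \<Rightarrow> bool" where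
  "reduced_partition l s J G p \<longleftrightarrow> (\<forall>v\<in>verts G. p v < l) \<and>
     has_induced J (induced G {v\<in>verts G. p v = 0}) \<and>
     (\<forall>i. 1 \<le> i \<and> i \<le> s \<longrightarrow> stable_in G {v\<in>verts G. p v = i}) \<and>
     (\<forall>i. s < i \<and> i < l \<longrightarrow> clique_in G {v\<in>verts G. p v = i})"

lemma reduced_iff_partitions:
  "reduced F J \<longleftrightarrow>
     (\<exists>s. s + 1 \<le> chi_c F \<and> (\<forall>G p. graph G \<longrightarrow> reduced_partition (chi_c F) s J G p \<longrightarrow> G \<in> F))"
  unfolding reduced_def reduced_partition_def Let_def by blast

section \<open>The complete bipartite graph plus a diamond\<close>

text \<open>The sides of \<open>K\<^sub>a\<^sub>,\<^sub>a\<close> are \<open>{..<a}\<close> and \<open>{a..<2*a}\<close>; on \<open>{2*a..<2*a+4}\<close> sits the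
  diamond, i.e. \<open>K\<^sub>4\<close> minus the edge \<open>{2*a, 2*a+1}\<close>.\<close>

definition biclique_diamond_adj :: "nat \<Rightarrow> nat \<Rightarrow> nat \<Rightarrow> bool" where
  "biclique_diamond_adj a u v \<longleftrightarrow>
     (u < a \<and> a \<le> v \<and> v < 2*a) \<or> (v < a \<and> a \<le> u \<and> u < 2*a) \<or>
     (2*a \<le> u \<and> u < 2*a+4 \<and> 2*a \<le> v \<and> v < 2*a+4 \<and> u \<noteq> v \<and> \<not> (u < 2*a+2 \<and> v < 2*a+2))"

definition biclique_diamond :: "nat \<Rightarrow> nat graph" where
  "biclique_diamond a = ({..<2*a+4}, {{u, v} | u v. biclique_diamond_adj a u v})"

lemma verts_biclique_diamond [simp]: "verts (biclique_diamond a) = {..<2*a+4}"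
  by (simp add: biclique_diamond_def verts_def)

lemma adj_biclique_diamond [simp]: "adj (biclique_diamond a) u v \<longleftrightarrow> biclique_diamond_adj a u v"
  unfolding adj_def edges_def biclique_diamond_def biclique_diamond_adj_def
  by (auto simp: doubleton_eq_iff)

lemma graph_biclique_diamond: "graph (biclique_diamond a)"
proof -
  have "u < 2*a+4 \<and> v < 2*a+4 \<and> u \<noteq> v" if "biclique_diamond_adj a u v" for u v
    using that by (auto simp: biclique_diamond_adj_def)
  then show ?thesis
    unfolding graph_def by (simp add: biclique_diamond_def verts_def edges_def) blast
qed

lemma biclique_diamond_in_Hst:
  assumes "1 \<le> a" "a + 2 \<le> s + t"
  shows "biclique_diamond a \<in> Hst s t"
proof -
  consider "s = 0" | "s = 1" | "2 \<le> s" by linarith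
  then show ?thesis
  proof cases
    case 1
    show ?thesis
      by (rule HstI[OF graph_biclique_diamond, where p = "\<lambda>v. if v < a then v else if v < 2*a then v - a
            else if v = 2*a+1 then a+1 else a"])
        (use 1 assms in \<open>auto simp: clique_in_def biclique_diamond_adj_def\<close>)
  next
    case 2
    show ?thesis
      by (rule HstI[OF graph_biclique_diamond, where p = "\<lambda>v. if v < a \<or> v = 2*a \<or> v = 2*a+1 then 0
            else if v < 2*a then v - a + 1 else a+1"])
        (use 2 assms in \<open>auto simp: clique_in_def stable_in_def biclique_diamond_adj_def\<close>)
  next
    case 3
    show ?thesis
      by (rule HstI[OF graph_biclique_diamond, where p = "\<lambda>v. if v < a \<or> v = 2*a \<or> v = 2*a+1 then 0
            else if v < 2*a \<or> v = 2*a+2 then 1 else 2"])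
        (use 3 assms in \<open>auto simp: clique_in_def stable_in_def biclique_diamond_adj_def\<close>)
  qed
qed

lemma Hst_0_subset_Forb_biclique_diamond: "Hst 0 (a + 1) \<subseteq> Forb (biclique_diamond a)"
proof
  fix G assume "G \<in> Hst 0 (a + 1)"
  then obtain p where G: "graph G" and p: "\<forall>v\<in>verts G. p v < a + 1"
    and cliques: "\<forall>i<a + 1. clique_in G {v\<in>verts G. p v = i}"
    unfolding Hst_def by auto
  have "\<not> has_induced G (biclique_diamond a)"
  proof
    assume "has_induced G (biclique_diamond a)"
    then obtain g where g: "embedding (biclique_diamond a) G g"
      unfolding has_induced_iff_embedding by blast
    let ?T = "{..<a} \<union> {2*a, 2*a+1}"
    have "card ?T \<le> card {..<a + 1}"
    proof (rule embedded_stable_le_clique_parts[OF g])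
      show "stable_in (biclique_diamond a) ?T"
        by (auto simp: stable_in_def biclique_diamond_adj_def)
      show "p (g v) \<in> {..<a + 1}" if "v \<in> ?T" for v
        using that g p unfolding embedding_def image_subset_iff by auto
    qed (use cliques in auto)
    moreover have "card ?T = a + 2" by simp
    ultimately show False by simp
  qed
  then show "G \<in> Forb (biclique_diamond a)" unfolding Forb_def using G by simp
qed

lemma chi_c_Forb_biclique_diamond:
  assumes "1 \<le> a"
  shows "chi_c (Forb (biclique_diamond a)) = a + 1"
  unfolding chi_c_def
proof (rule Greatest_equality)
  show "\<exists>s\<le>a + 1. Hst s (a + 1 - s) \<subseteq> Forb (biclique_diamond a)"
    using Hst_0_subset_Forb_biclique_diamond[of a] by (intro exI[where x = 0]) simp
next
  fix l assume "\<exists>s\<le>l. Hst s (l - s) \<subseteq> Forb (biclique_diamond a)"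
  then obtain s where s: "s \<le> l" "Hst s (l - s) \<subseteq> Forb (biclique_diamond a)" by blast
  show "l \<le> a + 1"
  proof (rule ccontr)
    assume "\<not> l \<le> a + 1"
    then have "biclique_diamond a \<in> Hst s (l - s)"
      using biclique_diamond_in_Hst[OF assms] s(1) by simp
    then show False using s(2) not_in_Forb_self by blast
  qed
qed

lemma reduced_Forb_biclique_diamondE:
  assumes "1 \<le> a" "reduced (Forb (biclique_diamond a)) J"
  obtains s where "s \<le> a" "\<And>p. \<not> reduced_partition (a + 1) s J (biclique_diamond a) p"
proof -
  obtain s where "s \<le> a"
    and "\<And>G p. graph G \<Longrightarrow> reduced_partition (a + 1) s J G p \<Longrightarrow> G \<in> Forb (biclique_diamond a)"
    using assms(2) unfolding reduced_iff_partitions chi_c_Forb_biclique_diamond[OF assms(1)] by auto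
  then show thesis
    using that graph_biclique_diamond not_in_Forb_self by blast
qed

lemma biclique_diamond_partition_two_stable:
  assumes "3 \<le> a" "2 \<le> s" "s \<le> a"
  shows "\<exists>p. reduced_partition (a + 1) s J (biclique_diamond a) p"
proof -
  define p where
    "p v = (if v < a \<or> v = 2*a \<or> v = 2*a+1 then 1 else if v < 2*a \<or> v = 2*a+2 then 2 else 3 :: nat)"
    for v :: nat
  have part_0: "{v \<in> verts (biclique_diamond a). p v = 0} = {}" by (auto simp: p_def)
  have "has_induced J (induced (biclique_diamond a) {v \<in> verts (biclique_diamond a). p v = 0})"
    unfolding part_0 by (rule has_induced_empty)
  then have "reduced_partition (a + 1) s J (biclique_diamond a) p"
    unfolding reduced_partition_def using assms
    by (auto simp: p_def stable_in_def clique_in_def biclique_diamond_adj_def)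
  then show ?thesis by blast
qed

lemma biclique_diamond_partition_one_stable:
  assumes "2 \<le> a" "has_induced J (induced (biclique_diamond a) {0, 1})"
  shows "\<exists>p. reduced_partition (a + 1) 1 J (biclique_diamond a) p"
proof -
  define p where "p v = (if v < 2 then 0 else if v < a then v else if v < 2*a+2 then 1 else a)" for v :: nat
  have "{v \<in> verts (biclique_diamond a). p v = 0} = {0, 1}" using assms(1) by (auto simp: p_def)
  then have "reduced_partition (a + 1) 1 J (biclique_diamond a) p"
    unfolding reduced_partition_def using assms
    by (auto simp: p_def stable_in_def clique_in_def biclique_diamond_adj_def)
  then show ?thesis by blast
qed

text \<open>Outside \<open>X\<close>, the graph is covered by \<open>a\<close> cliques: edges \<open>{i, a + i}\<close> of a perfect matching of
  \<open>K\<^sub>a\<^sub>,\<^sub>a\<close> and what is left of the diamond.\<close>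

lemma biclique_diamond_partition_cliques:
  assumes "2 \<le> a" and X: "X = {0, a, 2*a} \<or> X = {0, 1, a, a+1} \<or> X = {2*a, 2*a+1, 2*a+2, 2*a+3}"
    and "has_induced J (induced (biclique_diamond a) X)"
  shows "\<exists>p. reduced_partition (a + 1) 0 J (biclique_diamond a) p"
proof -
  have "\<exists>p. {v \<in> verts (biclique_diamond a). p v = 0} = X \<and>
      (\<forall>v\<in>verts (biclique_diamond a). p v < a + 1) \<and>
      (\<forall>i. 0 < i \<and> i < a + 1 \<longrightarrow> clique_in (biclique_diamond a) {v\<in>verts (biclique_diamond a). p v = i})"
    using X
  proof (elim disjE)
    assume X: "X = {0, a, 2*a}"
    show ?thesis
      by (rule exI[where x = "\<lambda>v. if v \<in> X then 0 else if v < a then v else if v < 2*a then v - a else a"])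
        (use X assms(1) in \<open>auto simp: clique_in_def biclique_diamond_adj_def\<close>)
  next
    assume X: "X = {0, 1, a, a+1}"
    show ?thesis
      by (rule exI[where x = "\<lambda>v. if v \<in> X then 0 else if v < a then v - 1 else if v < 2*a then v - a - 1
            else if v = 2*a+1 then a else a - 1"])
        (use X assms(1) in \<open>auto simp: clique_in_def biclique_diamond_adj_def\<close>)
  next
    assume X: "X = {2*a, 2*a+1, 2*a+2, 2*a+3}"
    show ?thesis
      by (rule exI[where x = "\<lambda>v. if v \<in> X then 0 else if v < a then v + 1 else v - a + 1"])
        (use X assms(1) in \<open>auto simp: clique_in_def biclique_diamond_adj_def\<close>)
  qed
  then show ?thesis
    unfolding reduced_partition_def using assms(3) by auto
qed

lemma has_induced_biclique_diamond_coP3: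
  assumes "graph J" "1 \<le> a"
    and "{x, y, z} \<subseteq> verts J" "adj J x y" "z \<noteq> x" "z \<noteq> y" "\<not> adj J x z" "\<not> adj J y z"
  shows "has_induced J (induced (biclique_diamond a) {0, a, 2*a})"
proof (rule has_induced_inducedI[where g = "\<lambda>t. if t = 0 then x else if t = a then y else z"])
  have "x \<noteq> y" using graph_adjD[OF assms(1,4)] by simp
  then show "inj_on (\<lambda>t. if t = 0 then x else if t = a then y else z) {0, a, 2*a}"
    using assms(2,5,6) by (auto simp: inj_on_def)
  show "(\<lambda>t. if t = 0 then x else if t = a then y else z) ` {0, a, 2*a} \<subseteq> verts J"
    using assms(3) by auto
  fix u v assume "u \<in> {0, a, 2*a}" "v \<in> {0, a, 2*a}"
  then show "adj (biclique_diamond a) u v \<longleftrightarrow>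
      adj J (if u = 0 then x else if u = a then y else z) (if v = 0 then x else if v = a then y else z)"
    using assms(2,4-8) graph_adjD[OF assms(1)] adj_sym[of J]
    by (auto simp: biclique_diamond_adj_def)
qed

lemma has_induced_biclique_diamond_C4:
  assumes "graph J" "2 \<le> a"
    and "{b, c, v, w} \<subseteq> verts J" "b \<noteq> c" "v \<noteq> w" "\<not> adj J b c" "\<not> adj J v w"
    and "adj J b v" "adj J b w" "adj J c v" "adj J c w"
  shows "has_induced J (induced (biclique_diamond a) {0, 1, a, a+1})"
proof (rule has_induced_inducedI[where
      g = "\<lambda>t. if t = 0 then b else if t = 1 then c else if t = a then v else w"])
  have "b \<noteq> v" "b \<noteq> w" "c \<noteq> v" "c \<noteq> w" using graph_adjD[OF assms(1)] assms(8-11) by auto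
  then show "inj_on (\<lambda>t. if t = 0 then b else if t = 1 then c else if t = a then v else w) {0, 1, a, a+1}"
    using assms(2,4,5) by (auto simp: inj_on_def)
  show "(\<lambda>t. if t = 0 then b else if t = 1 then c else if t = a then v else w) ` {0, 1, a, a+1}
      \<subseteq> verts J"
    using assms(3) by auto
  fix x y assume "x \<in> {0, 1, a, a+1}" "y \<in> {0, 1, a, a+1}"
  then show "adj (biclique_diamond a) x y \<longleftrightarrow>
      adj J (if x = 0 then b else if x = 1 then c else if x = a then v else w)
        (if y = 0 then b else if y = 1 then c else if y = a then v else w)"
    using assms(2,4-11) graph_adjD[OF assms(1)] adj_sym[of J]
    by (auto simp: biclique_diamond_adj_def)
qed

lemma has_induced_biclique_diamond_diamond:
  assumes "graph J"
    and "{b, c, v, w} \<subseteq> verts J" "b \<noteq> c" "\<not> adj J b c" "adj J v w"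
    and "adj J b v" "adj J b w" "adj J c v" "adj J c w"
  shows "has_induced J (induced (biclique_diamond a) {2*a, 2*a+1, 2*a+2, 2*a+3})"
proof (rule has_induced_inducedI[where
      g = "\<lambda>t. if t = 2*a then b else if t = 2*a+1 then c else if t = 2*a+2 then v else w"])
  have "b \<noteq> v" "b \<noteq> w" "c \<noteq> v" "c \<noteq> w" "v \<noteq> w" using graph_adjD[OF assms(1)] assms(5-9) by auto
  then show "inj_on (\<lambda>t. if t = 2*a then b else if t = 2*a+1 then c else if t = 2*a+2 then v else w)
      {2*a, 2*a+1, 2*a+2, 2*a+3}"
    using assms(3) by (auto simp: inj_on_def)
  show "(\<lambda>t. if t = 2*a then b else if t = 2*a+1 then c else if t = 2*a+2 then v else w) `
      {2*a, 2*a+1, 2*a+2, 2*a+3} \<subseteq> verts J"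
    using assms(2) by auto
  fix x y assume "x \<in> {2*a, 2*a+1, 2*a+2, 2*a+3}" "y \<in> {2*a, 2*a+1, 2*a+2, 2*a+3}"
  then show "adj (biclique_diamond a) x y \<longleftrightarrow>
      adj J (if x = 2*a then b else if x = 2*a+1 then c else if x = 2*a+2 then v else w)
        (if y = 2*a then b else if y = 2*a+1 then c else if y = 2*a+2 then v else w)"
    using assms(3-9) graph_adjD[OF assms(1)] adj_sym[of J]
    by (auto simp: biclique_diamond_adj_def)
qed

lemma s_star_1_if_reduced_Forb_biclique_diamond:
  assumes a: "3 \<le> a" and "J \<in> red (Forb (biclique_diamond a))"
  shows "s_star 1 J"
proof -
  have J: "graph J" and "reduced (Forb (biclique_diamond a)) J"
    using assms(2) by (auto simp: red_def)
  moreover have "1 \<le> a" using a by simp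
  ultimately obtain s where "s \<le> a"
    and no_partition: "\<And>p. \<not> reduced_partition (a + 1) s J (biclique_diamond a) p"
    using reduced_Forb_biclique_diamondE by blast
  consider "s = 0" | "s = 1" | "2 \<le> s" by linarith
  then show ?thesis
  proof cases
    case 1
    have no_X: "\<not> has_induced J (induced (biclique_diamond a) X)"
      if X: "X = {0, a, 2*a} \<or> X = {0, 1, a, a+1} \<or> X = {2*a, 2*a+1, 2*a+2, 2*a+3}" for X
    proof
      assume "has_induced J (induced (biclique_diamond a) X)"
      then obtain p where "reduced_partition (a + 1) 0 J (biclique_diamond a) p"
        using biclique_diamond_partition_cliques[of a X J] a X by auto
      then show False using no_partition 1 by simp
    qed
    show ?thesis
    proof (rule s_star_1_if_no_coP3_C4_diamond[OF J])
      fix x y z assume "{x, y, z} \<subseteq> verts J" "adj J x y" "z \<noteq> x" "z \<noteq> y"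
        "\<not> adj J x z" "\<not> adj J y z"
      then show False
        using has_induced_biclique_diamond_coP3[OF J, of a x y z] no_X[of "{0, a, 2*a}"] a by simp
    next
      fix b c v w assume "{b, c, v, w} \<subseteq> verts J" "b \<noteq> c" "v \<noteq> w" "\<not> adj J b c" "\<not> adj J v w"
        "adj J b v" "adj J b w" "adj J c v" "adj J c w"
      then show False
        using has_induced_biclique_diamond_C4[OF J, of a b c v w] no_X[of "{0, 1, a, a+1}"] a by simp
    next
      fix b c v w assume "{b, c, v, w} \<subseteq> verts J" "b \<noteq> c" "\<not> adj J b c" "adj J v w"
        "adj J b v" "adj J b w" "adj J c v" "adj J c w"
      then show False
        using has_induced_biclique_diamond_diamond[OF J, of b c v w a]
          no_X[of "{2*a, 2*a+1, 2*a+2, 2*a+3}"] by simp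
    qed
  next
    case 2
    have "clique_in J (verts J)"
    proof (rule ccontr)
      assume "\<not> clique_in J (verts J)"
      then obtain x y where xy: "x \<in> verts J" "y \<in> verts J" "x \<noteq> y" "\<not> adj J x y"
        unfolding clique_in_def by auto
      have "has_induced J (induced (biclique_diamond a) {0, 1})"
        by (rule has_induced_inducedI[where g = "\<lambda>t. if t = 0 then x else y"])
          (use xy a adj_sym[of J] graph_adjD[OF J] in \<open>auto simp: biclique_diamond_adj_def\<close>)
      then obtain p where "reduced_partition (a + 1) 1 J (biclique_diamond a) p"
        using biclique_diamond_partition_one_stable[of a J] a by auto
      then show False using no_partition 2 by simp
    qed
    then show ?thesis by (rule s_star_if_clique)
  next
    case 3
    then show ?thesis
      using biclique_diamond_partition_two_stable[OF a 3 \<open>s \<le> a\<close>] no_partition by blast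
  qed
qed

lemma biclique_diamond_not_in_star_set:
  assumes "star_set (biclique_diamond a) A"
  obtains z where "2*a \<le> z" "z < 2*a+4" "z \<notin> A"
proof -
  have "\<not> {2*a, 2*a+1, 2*a+2, 2*a+3} \<subseteq> A"
  proof
    assume diamond: "{2*a, 2*a+1, 2*a+2, 2*a+3} \<subseteq> A"
    moreover have "adj (biclique_diamond a) (2*a) (2*a+2)" by (simp add: biclique_diamond_adj_def)
    ultimately obtain c where "c \<in> {2*a, 2*a+2}" "stable_in (biclique_diamond a) (A - {c})"
      using assms by (elim star_set_edge_centre) auto
    moreover have "adj (biclique_diamond a) (2*a+1) (2*a+3)" by (simp add: biclique_diamond_adj_def)
    ultimately show False using diamond unfolding stable_in_def by auto
  qed
  then obtain z where "z \<in> {2*a, 2*a+1, 2*a+2, 2*a+3}" "z \<notin> A" by blast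
  then show thesis by (intro that[of z]) auto
qed

lemma biclique_diamond_stable_avoiding_star_set:
  assumes "1 \<le> a" "star_set (biclique_diamond a) A"
  obtains T where "T \<subseteq> verts (biclique_diamond a)" "T \<inter> A = {}" "card T = a + 1"
    "stable_in (biclique_diamond a) T"
proof -
  obtain z where z: "2*a \<le> z" "z < 2*a+4" "z \<notin> A"
    using biclique_diamond_not_in_star_set[OF assms(2)] by blast
  consider "\<forall>t\<in>A. a \<le> t" | "\<forall>t\<in>A. \<not> (a \<le> t \<and> t < 2*a)"
    | x y where "x \<in> A" "y \<in> A" "x < a" "a \<le> y" "y < 2*a"
    by (meson not_le)
  then show thesis
  proof cases
    case 1
    show thesis
      by (rule that[of "{..<a} \<union> {z}"]) (use 1 z in \<open>auto simp: stable_in_def biclique_diamond_adj_def\<close>)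
  next
    case 2
    show thesis
      by (rule that[of "{a..<2*a} \<union> {z}"]) (use 2 z in \<open>auto simp: stable_in_def biclique_diamond_adj_def\<close>)
  next
    case (3 x y)
    have "adj (biclique_diamond a) x y" using 3 by (simp add: biclique_diamond_adj_def)
    then obtain c where c: "c \<in> {x, y}" "\<forall>v\<in>A - {c}. biclique_diamond_adj a c v"
      using star_set_edge_centre[OF assms(2) 3(1,2)] by auto
    show thesis
    proof (cases "c = x")
      case True
      then have "A - {c} \<subseteq> {a..<2*a}" using c(2) 3(3) by (auto simp: biclique_diamond_adj_def)
      then show thesis
        by (intro that[of "({..<a} - {c}) \<union> {2*a, 2*a+1}"])
          (use True 3 in \<open>auto simp: stable_in_def biclique_diamond_adj_def\<close>)
    next
      case False
      then have "c = y" using c(1) by simp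
      then have "A - {c} \<subseteq> {..<a}" using c(2) 3(4,5) by (auto simp: biclique_diamond_adj_def)
      then show thesis
        by (intro that[of "({a..<2*a} - {c}) \<union> {2*a, 2*a+1}"])
          (use \<open>c = y\<close> 3 in \<open>auto simp: stable_in_def biclique_diamond_adj_def\<close>)
    qed
  qed
qed

text \<open>An induced copy of the graph would meet the star part in a star set, leaving \<open>a + 1\<close> pairwise
  non-adjacent vertices for the \<open>a\<close> clique parts.\<close>

lemma biclique_diamond_free_if_star_partition:
  assumes a: "1 \<le> a" and "reduced_partition (a + 1) 0 (star_graph m) G p"
  shows "\<not> has_induced G (biclique_diamond a)"
proof
  assume "has_induced G (biclique_diamond a)"
  then obtain g where g: "embedding (biclique_diamond a) G g"
    unfolding has_induced_iff_embedding by blast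
  have p_bound: "\<forall>v\<in>verts G. p v < a + 1"
    and "has_induced (star_graph m) (induced G {v\<in>verts G. p v = 0})"
    and cliques: "\<forall>i. 0 < i \<and> i < a + 1 \<longrightarrow> clique_in G {v\<in>verts G. p v = i}"
    using assms(2) unfolding reduced_partition_def by auto
  then have "star_set G {v\<in>verts G. p v = 0}" by (intro star_set_if_has_induced_star_graph)
  define A where "A = {v \<in> verts (biclique_diamond a). p (g v) = 0}"
  have "star_set G (g ` A)"
    using \<open>star_set G {v\<in>verts G. p v = 0}\<close>
    by (rule star_set_subset) (use g in \<open>auto simp: A_def embedding_def\<close>)
  then have "star_set (biclique_diamond a) A"
    by (rule star_set_pullback) (use g in \<open>auto simp: A_def embedding_def intro: inj_on_subset\<close>)
  then obtain T where T: "T \<subseteq> verts (biclique_diamond a)" "T \<inter> A = {}" "card T = a + 1"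
    "stable_in (biclique_diamond a) T"
    using biclique_diamond_stable_avoiding_star_set[OF a] by blast
  have "card T \<le> card {1..a}"
  proof (rule embedded_stable_le_clique_parts[OF g T(1,4)])
    fix v assume "v \<in> T"
    then have "v \<in> verts (biclique_diamond a)" "v \<notin> A" using T(1,2) by blast+
    moreover have "g v \<in> verts G"
      using g \<open>v \<in> verts (biclique_diamond a)\<close> unfolding embedding_def by blast
    ultimately show "p (g v) \<in> {1..a}" using p_bound unfolding A_def by fastforce
  qed (use cliques in auto)
  then show False using T(3) by simp
qed

lemma star_graph_in_red_Forb_biclique_diamond:
  assumes "1 \<le> a"
  shows "star_graph m \<in> red (Forb (biclique_diamond a))"
proof -
  have "reduced (Forb (biclique_diamond a)) (star_graph m)"
    unfolding reduced_iff_partitions chi_c_Forb_biclique_diamond[OF assms]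
  proof (intro exI[where x = 0] conjI allI impI)
    fix G p assume "graph G" "reduced_partition (a + 1) 0 (star_graph m) G p"
    then show "G \<in> Forb (biclique_diamond a)"
      unfolding Forb_def using biclique_diamond_free_if_star_partition[OF assms] by blast
  qed simp
  then show ?thesis unfolding red_def using graph_star_graph by blast
qed

lemma critical_graph_1_biclique_diamond: "3 \<le> a \<Longrightarrow> critical_graph 1 (biclique_diamond a)"
  unfolding critical_graph_def critical_family_def
  using s_star_1_if_reduced_Forb_biclique_diamond by blast

lemma not_critical_graph_0_biclique_diamond: "1 \<le> a \<Longrightarrow> \<not> critical_graph 0 (biclique_diamond a)"
  unfolding critical_graph_def critical_family_def
proof
  assume "1 \<le> a" and "\<exists>n0. \<forall>K\<in>red (Forb (biclique_diamond a)). n0 \<le> card (verts K) \<longrightarrow> s_star 0 K"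
  then obtain n0 where n0: "\<forall>K\<in>red (Forb (biclique_diamond a)). n0 \<le> card (verts K) \<longrightarrow> s_star 0 K"
    by blast
  have "s_star 0 (star_graph (n0 + 2))"
    using n0 star_graph_in_red_Forb_biclique_diamond[OF \<open>1 \<le> a\<close>] by simp
  then show False using not_s_star_0_star_graph by simp
qed

theorem theorem2p6:
  shows "\<exists>S :: nat graph set. infinite S \<and>
    (\<forall>H\<in>S. graph H \<and> critical_graph 1 H \<and> \<not> critical_graph 0 H) \<and>
    (\<forall>H1\<in>S. \<forall>H2\<in>S. H1 \<noteq> H2 \<longrightarrow> \<not> iso H1 H2)"
proof (intro exI conjI)
  let ?S = "range (\<lambda>k. biclique_diamond (k + 3))"
  have "inj (\<lambda>k. biclique_diamond (k + 3))"
  proof (rule injI)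
    fix i j assume "biclique_diamond (i + 3) = biclique_diamond (j + 3)"
    then have "card (verts (biclique_diamond (i + 3))) = card (verts (biclique_diamond (j + 3)))"
      by simp
    then show "i = j" by simp
  qed
  then show "infinite ?S" using finite_imageD infinite_UNIV_nat by blast
  show "\<forall>H\<in>?S. graph H \<and> critical_graph 1 H \<and> \<not> critical_graph 0 H"
    using graph_biclique_diamond critical_graph_1_biclique_diamond not_critical_graph_0_biclique_diamond
    by simp
  show "\<forall>H1\<in>?S. \<forall>H2\<in>?S. H1 \<noteq> H2 \<longrightarrow> \<not> iso H1 H2"
  proof (intro ballI impI notI)
    fix H1 H2 assume "H1 \<in> ?S" "H2 \<in> ?S" "H1 \<noteq> H2" "iso H1 H2"
    then obtain i j where "H1 = biclique_diamond (i + 3)" "H2 = biclique_diamond (j + 3)" "i \<noteq> j"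
      by blast
    then show False using iso_card_verts[OF \<open>iso H1 H2\<close>] by simp
  qed
qed

end
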